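(* Let $X$ be a compact metric space, $(f_n)_{n\ge1}$ a sequence of continuous maps $X\to X$, and $(k_n)_{n\ge1}$ a strictly increasing sequence of positive integers. Define $\hat f_1=f_{k_1}\circ\cdots\circ f_1$ and $\hat f_n=f_{k_n}\circ\cdots\circ f_{k_{n-1}+1}$ for $n\ge2$, and let $\gamma\colon\mathbb{N}\to\mathbb{N}$, $\gamma(n)=k_n$. If $p,q\in\mathbb{N}^*$ and $\overline{\gamma}(q)=p$, then $\hat f_1^q=f_1^p$. In particular $E(X,\hat f_{1,\infty})\subseteq E(X,f_{1,\infty})$.
   Context: $\mathbb{N}=\{1,2,3,\dots\}$, $\beta(\mathbb{N})$ the ultrafilters on $\mathbb{N}$ (principal ones identified with elements of $\mathbb{N}$), $\mathbb{N}^*$ the free ones. For $p\in\mathbb{N}^*$, $p\text{-}\lim_n x_n$ is the unique $y$ with $\{n:x_n\in V\}\in p$ for all neighbourhoods $V$ of $y$. For a sequence $(g_n)$ of continuous self-maps of $X$: $g_1^n=g_n\circ\cdots\circ g_1$, $g_1^p(x)=p\text{-}\lim_n g_1^n(x)$ for $p\in\mathbb{N}^*$, and $E(X,g_{1,\infty})$ is the closure of $\{g_1^n:n\in\mathbb{N}\}$ in $X^X$ (pointwise topology). $\overline{\gamma}$ is the Stone extension of $\gamma$: $\overline{\gamma}(q)=\{A\subseteq\mathbb{N}:\gamma^{-1}(A)\in q\}$. *)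

theory Defs
  imports "HOL-Analysis.Analysis"
begin

definition is_ultrafilter :: "'a filter \<Rightarrow> bool" where
  "is_ultrafilter F \<longleftrightarrow> F \<noteq> bot \<and> (\<forall>A. eventually (\<lambda>x. x \<in> A) F \<or> eventually (\<lambda>x. x \<notin> A) F)"

definition free_ultrafilter :: "nat filter \<Rightarrow> bool" where
  "free_ultrafilter p \<longleftrightarrow> is_ultrafilter p \<and> (\<forall>n. \<not> eventually (\<lambda>m. m = n) p)"

text \<open>Stone extension of gamma: gamma-bar(q) = {A. gamma -` A \<in> q}, i.e. filtermap.\<close>
definition stone_ext :: "(nat \<Rightarrow> nat) \<Rightarrow> nat filter \<Rightarrow> nat filter" where
  "stone_ext \<gamma> q = filtermap \<gamma> q"

fun comp_upto :: "(nat \<Rightarrow> 'a \<Rightarrow> 'a) \<Rightarrow> nat \<Rightarrow> 'a \<Rightarrow> 'a" where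
  "comp_upto g 0 = id"
| "comp_upto g (Suc n) = g (Suc n) \<circ> comp_upto g n"

text \<open>block_comp f a b = f_b o ... o f_(a+1)  (identity if b \<le> a).\<close>
fun block_comp :: "(nat \<Rightarrow> 'a \<Rightarrow> 'a) \<Rightarrow> nat \<Rightarrow> nat \<Rightarrow> 'a \<Rightarrow> 'a" where
  "block_comp f a 0 = id"
| "block_comp f a (Suc b) = (if Suc b \<le> a then id else f (Suc b) \<circ> block_comp f a b)"

definition hat_seq :: "(nat \<Rightarrow> 'a \<Rightarrow> 'a) \<Rightarrow> (nat \<Rightarrow> nat) \<Rightarrow> nat \<Rightarrow> 'a \<Rightarrow> 'a" where
  "hat_seq f k n = (if n = 1 then block_comp f 0 (k 1) else block_comp f (k (n - 1)) (k n))"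

definition ult_iter :: "(nat \<Rightarrow> 'a::t2_space \<Rightarrow> 'a) \<Rightarrow> nat filter \<Rightarrow> 'a \<Rightarrow> 'a" where
  "ult_iter g p x = Lim p (\<lambda>n. comp_upto g n x)"

text \<open>Enveloping semigroup E(X, g_{1,\<infinity>}): closure of {g_1^n : n \<ge> 1} in X^X with the
pointwise (product) topology; maps X \<rightarrow> X are represented as extensional functions.\<close>
definition env_semigroup :: "'a::topological_space set \<Rightarrow> (nat \<Rightarrow> 'a \<Rightarrow> 'a) \<Rightarrow> ('a \<Rightarrow> 'a) set" where
  "env_semigroup X g = (product_topology (\<lambda>_. subtopology euclidean X) X)
      closure_of {restrict (comp_upto g n) X | n. n \<ge> 1}"

end

theory Submission
  imports Defs
begin

text \<open>The blocks telescope: the n-th iterate of the blocked sequence is the \<open>k n\<close>-th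
  iterate of \<open>f\<close>, for every \<open>n \<ge> 1\<close>. So the blocked orbit of \<open>x\<close> is the \<open>f\<close>-orbit sampled
  along \<open>k\<close>, and a \<open>q\<close>-limit of a sampled sequence is the \<open>filtermap k q\<close>-limit of the
  sequence itself; the free ultrafilter \<open>q\<close> ignores the index 0, where telescoping fails.\<close>

lemma block_comp_comp_upto:
  "a \<le> b \<Longrightarrow> block_comp f a b \<circ> comp_upto f a = comp_upto f b"
proof (induction b)
  case 0
  then show ?case by simp
next
  case (Suc b)
  show ?case
  proof (cases "Suc b \<le> a")
    case True
    with Suc.prems have "a = Suc b" by simp
    then show ?thesis by simp
  next
    case False
    then have "block_comp f a b \<circ> comp_upto f a = comp_upto f b"
      by (intro Suc.IH) simp
    with False show ?thesis by (simp add: fun_eq_iff)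
  qed
qed

lemma comp_upto_hat_seq:
  assumes mono: "\<And>n. 1 \<le> n \<Longrightarrow> k n \<le> k (Suc n)"
    and "1 \<le> n"
  shows "comp_upto (hat_seq f k) n = comp_upto f (k n)"
  using \<open>1 \<le> n\<close>
proof (induction n rule: dec_induct)
  case base
  show ?case
    using block_comp_comp_upto[of 0 "k 1" f] by (simp add: hat_seq_def)
next
  case (step n)
  then have "hat_seq f k (Suc n) = block_comp f (k n) (k (Suc n))"
    by (simp add: hat_seq_def)
  with step block_comp_comp_upto[OF mono, of n f] show ?case by simp
qed

lemma free_ultrafilter_eventually_neq:
  assumes "free_ultrafilter q"
  shows "eventually (\<lambda>m. m \<noteq> n) q"
proof -
  have "eventually (\<lambda>m. m \<in> {n}) q \<or> eventually (\<lambda>m. m \<notin> {n}) q"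
    using assms unfolding free_ultrafilter_def is_ultrafilter_def by blast
  with assms show ?thesis unfolding free_ultrafilter_def by simp
qed

lemma Lim_filtermap: "Lim (filtermap h F) g = Lim F (\<lambda>n. g (h n))"
  unfolding t2_space_class.Lim_def by (simp add: filterlim_filtermap)

lemma ult_iter_hat_seq:
  assumes mono: "\<And>n. 1 \<le> n \<Longrightarrow> k n \<le> k (Suc n)"
    and "free_ultrafilter q"
  shows "ult_iter (hat_seq f k) q x = ult_iter f (stone_ext k q) x"
proof -
  have "eventually (\<lambda>n. comp_upto (hat_seq f k) n x = comp_upto f (k n) x) q"
    using free_ultrafilter_eventually_neq[OF \<open>free_ultrafilter q\<close>, of 0]
    by (rule eventually_mono) (simp add: comp_upto_hat_seq[where k = k, OF mono])
  then have "Lim q (\<lambda>n. comp_upto (hat_seq f k) n x) = Lim q (\<lambda>n. comp_upto f (k n) x)"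
    by (rule Lim_cong) simp
  then show ?thesis
    by (simp add: ult_iter_def stone_ext_def Lim_filtermap)
qed

lemma env_semigroup_hat_seq_subset:
  assumes mono: "\<And>n. 1 \<le> n \<Longrightarrow> k n \<le> k (Suc n)"
    and "1 \<le> k 1"
  shows "env_semigroup X (hat_seq f k) \<subseteq> env_semigroup X f"
  unfolding env_semigroup_def
proof (rule closure_of_mono, safe)
  fix n :: nat
  assume "1 \<le> n"
  moreover have "k 1 \<le> k n"
    using \<open>1 \<le> n\<close> by (induction n rule: dec_induct) (auto intro: order_trans[OF _ mono])
  ultimately have "restrict (comp_upto (hat_seq f k) n) X = restrict (comp_upto f (k n)) X"
    and "1 \<le> k n"
    using \<open>1 \<le> k 1\<close> by (simp_all add: comp_upto_hat_seq[where k = k, OF mono])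
  then show "\<exists>m. restrict (comp_upto (hat_seq f k) n) X = restrict (comp_upto f m) X \<and> 1 \<le> m"
    by blast
qed

theorem theorem2p8:
  fixes X :: "'a::metric_space set"
    and f :: "nat \<Rightarrow> 'a \<Rightarrow> 'a"
    and k :: "nat \<Rightarrow> nat"
  assumes "compact X"
    and "\<And>n. n \<ge> 1 \<Longrightarrow> continuous_on X (f n)"
    and "\<And>n. n \<ge> 1 \<Longrightarrow> f n ` X \<subseteq> X"
    and "k 1 \<ge> 1"
    and "\<And>m n. 1 \<le> m \<Longrightarrow> m < n \<Longrightarrow> k m < k n"
  shows "(\<forall>p q. free_ultrafilter p \<and> free_ultrafilter q \<and> stone_ext k q = p \<longrightarrow>
            (\<forall>x\<in>X. ult_iter (hat_seq f k) q x = ult_iter f p x))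
         \<and> env_semigroup X (hat_seq f k) \<subseteq> env_semigroup X f"
proof -
  have mono: "k n \<le> k (Suc n)" if "1 \<le> n" for n
    using assms(5)[of n "Suc n"] that by simp
  show ?thesis
    using ult_iter_hat_seq[where k = k, OF mono]
      env_semigroup_hat_seq_subset[where k = k, OF mono assms(4)] by blast
qed

end
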